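(* Let $\mathbf{L}=(L,\wedge,\vee)$ be a semidistributive lattice. Then $\mathbf{L}$ hypersatisfies the hyper-quasi-identity $$(F(x,y)=F(x,z))\rightarrow (F(x,y)=F(x,G(y,z))),$$ where $F$ and $G$ are binary hypervariables. Explicitly: for all binary lattice terms $p(x,y)$ and $q(x,y)$ and all $a,b,c\in L$, if $p^{\mathbf L}(a,b)=p^{\mathbf L}(a,c)$ then $p^{\mathbf L}(a,b)=p^{\mathbf L}(a,q^{\mathbf L}(b,c))$.
   Context: A lattice is join-semidistributive if it satisfies the quasi-identity $x\vee y=x\vee z \rightarrow x\vee y = x\vee(y\wedge z)$, and meet-semidistributive if it satisfies $x\wedge y=x\wedge z\rightarrow x\wedge y=x\wedge(y\vee z)$. A lattice is semidistributive if it is both join- and meet-semidistributive. A hyper-quasi-identity with hypervariables $F,G$ is hypersatisfied in an algebra if the quasi-identity obtained by substituting arbitrary terms of the type (of the corresponding arities, here binary lattice terms) for the hypervariables, leaving the individual variables unchanged, holds in the algebra for all values of the individual variables. *)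

theory Defs
  imports Main
begin

datatype lterm2 = VarX | VarY | Meet lterm2 lterm2 | Join lterm2 lterm2

fun eval2 :: "lterm2 \<Rightarrow> 'a::lattice \<Rightarrow> 'a \<Rightarrow> 'a" where
  "eval2 VarX a b = a"
| "eval2 VarY a b = b"
| "eval2 (Meet s t) a b = inf (eval2 s a b) (eval2 t a b)"
| "eval2 (Join s t) a b = sup (eval2 s a b) (eval2 t a b)"

definition join_semidistributive :: "'a::lattice itself \<Rightarrow> bool" where
  "join_semidistributive _ \<longleftrightarrow>
     (\<forall>x y z :: 'a. sup x y = sup x z \<longrightarrow> sup x y = sup x (inf y z))"

definition meet_semidistributive :: "'a::lattice itself \<Rightarrow> bool" where
  "meet_semidistributive _ \<longleftrightarrow>
     (\<forall>x y z :: 'a. inf x y = inf x z \<longrightarrow> inf x y = inf x (sup y z))"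

definition semidistributive :: "'a::lattice itself \<Rightarrow> bool" where
  "semidistributive T \<longleftrightarrow> join_semidistributive T \<and> meet_semidistributive T"

end

theory Submission
  imports Defs
begin

text \<open>By absorption, every binary lattice term operation is a projection, the meet or the join.
  For each of these four operations, semidistributivity says exactly that the fibre
  \<open>{x. p(a, x) = p(a, b)}\<close> is closed under meet and join; and a sublattice containing
  \<open>b\<close> and \<open>c\<close> contains \<open>q(b, c)\<close> for every term \<open>q\<close>.\<close>

lemma eval2_in_projections_inf_sup:
  "eval2 p \<in> {(\<lambda>a b. a), (\<lambda>a b. b), inf, sup :: 'a::lattice \<Rightarrow> 'a \<Rightarrow> 'a}"
proof (induction p)
  case (Meet s t)
  then show ?case
    by (elim insertE emptyE)
      (simp_all add: fun_eq_iff inf_sup_aci inf_absorb1 inf_absorb2 sup_absorb1 sup_absorb2)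
next
  case (Join s t)
  then show ?case
    by (elim insertE emptyE)
      (simp_all add: fun_eq_iff inf_sup_aci inf_absorb1 inf_absorb2 sup_absorb1 sup_absorb2)
qed auto

lemma eval2_in_sublattice:
  assumes "\<And>x y. x \<in> S \<Longrightarrow> y \<in> S \<Longrightarrow> inf x y \<in> S"
    and "\<And>x y. x \<in> S \<Longrightarrow> y \<in> S \<Longrightarrow> sup x y \<in> S"
    and "b \<in> S" and "c \<in> S"
  shows "eval2 q b c \<in> S"
  using assms by (induction q) auto

lemma inf_eq_imp_inf_inf_eq:
  fixes a b c :: "'a::lattice"
  assumes "inf a b = inf a c"
  shows "inf a (inf b c) = inf a b"
  by (metis assms inf.assoc inf.idem inf.commute)

lemma sup_eq_imp_sup_sup_eq:
  fixes a b c :: "'a::lattice"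
  assumes "sup a b = sup a c"
  shows "sup a (sup b c) = sup a b"
  by (metis assms sup.assoc sup.idem sup.commute)

lemma semidistributive_inf_eq_imp_inf_sup_eq:
  fixes a b c :: "'a::lattice"
  assumes "semidistributive TYPE('a)" and "inf a b = inf a c"
  shows "inf a (sup b c) = inf a b"
  using assms unfolding semidistributive_def meet_semidistributive_def by metis

lemma semidistributive_sup_eq_imp_sup_inf_eq:
  fixes a b c :: "'a::lattice"
  assumes "semidistributive TYPE('a)" and "sup a b = sup a c"
  shows "sup a (inf b c) = sup a b"
  using assms unfolding semidistributive_def join_semidistributive_def by metis

lemma semidistributive_eval2_eq_inf_sup:
  fixes a x y :: "'a::lattice"
  assumes "semidistributive TYPE('a)"
    and "eval2 p a x = eval2 p a y"
  shows "eval2 p a (inf x y) = eval2 p a x \<and> eval2 p a (sup x y) = eval2 p a x"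
proof -
  from eval2_in_projections_inf_sup[of p]
  consider "eval2 p = (\<lambda>u v :: 'a. u)" | "eval2 p = (\<lambda>u v :: 'a. v)"
    | "eval2 p = (inf :: 'a \<Rightarrow> _)" | "eval2 p = (sup :: 'a \<Rightarrow> _)"
    by blast
  then show ?thesis
  proof cases
    case 1
    then show ?thesis by simp
  next
    case 2
    then show ?thesis using assms(2) by simp
  next
    case 3
    with assms(2) have "inf a x = inf a y" by simp
    with \<open>eval2 p = inf\<close> show ?thesis
      by (simp add: inf_eq_imp_inf_inf_eq semidistributive_inf_eq_imp_inf_sup_eq[OF assms(1)])
  next
    case 4
    with assms(2) have "sup a x = sup a y" by simp
    with \<open>eval2 p = sup\<close> show ?thesis
      by (simp add: sup_eq_imp_sup_sup_eq semidistributive_sup_eq_imp_sup_inf_eq[OF assms(1)])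
  qed
qed

theorem proposition3p2:
  fixes a b c :: "'a::lattice" and p q :: lterm2
  assumes "semidistributive TYPE('a)"
    and "eval2 p a b = eval2 p a c"
  shows "eval2 p a b = eval2 p a (eval2 q b c)"
proof -
  let ?fibre = "{x. eval2 p a x = eval2 p a b}"
  have "eval2 q b c \<in> ?fibre"
  proof (rule eval2_in_sublattice)
    show "inf x y \<in> ?fibre" "sup x y \<in> ?fibre" if "x \<in> ?fibre" "y \<in> ?fibre" for x y
      using that semidistributive_eval2_eq_inf_sup[OF assms(1), of p a x y] by auto
  qed (use assms(2) in auto)
  then show ?thesis
    by simp
qed

end
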